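(* Let $k\ge 2$ be an integer. For any $\epsilon\in(0,1)$, let $N$ be the integer part of $1/\epsilon$. Then $\widetilde{Z}_k(N+1)\le Z_k(\epsilon)\le \widetilde{Z}_k(N)$.
   Context: $\mu_{k+1}(q)$ denotes the indicator function of the $(k+1)$-free positive integers (not divisible by $p^{k+1}$ for any prime $p$); $p$ always denotes a prime. For $\epsilon\in(0,1)$, \[ Z_k(\epsilon)=\sum_{q\ge 1/\epsilon}\mu_{k+1}(q)\sum_{\substack{1\le m\le q\epsilon\\ \gcd(m,q)=1}}\ \prod_{p\mid q}\frac{1}{(p^k-1)^2} \] (this is the normalized diffraction intensity $\nu_k((0,\epsilon])/\nu_k(\{0\})$ of the $k$-free integers). For $N\in\mathbb{N}$, \[ \widetilde{Z}_k(N):=\sum_{q\in\mathbb{N}}\mu_{k+1}(q)\Bigl(\prod_{p\mid q}\frac{1}{(p^k-1)^2}\Bigr)\#\{m\in\mathbb{N}\cap[1,q/N]:\gcd(m,q)=1\}. \] *)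

theory Defs
  imports "HOL-Analysis.Analysis" "HOL-Computational_Algebra.Primes"
begin

definition mu_free :: "nat \<Rightarrow> nat \<Rightarrow> real" where
  "mu_free j q = (if q \<ge> 1 \<and> (\<forall>p::nat. prime p \<longrightarrow> \<not> p ^ j dvd q) then 1 else 0)"

definition wt :: "nat \<Rightarrow> nat \<Rightarrow> real" where
  "wt k q = (\<Prod>p\<in>prime_factors q. 1 / (real p ^ k - 1)^2)"

definition Zk :: "nat \<Rightarrow> real \<Rightarrow> real" where
  "Zk k eps = (\<Sum>\<^sub>\<infinity>q\<in>{q::nat. q \<ge> 1 \<and> real q \<ge> 1 / eps}.
      mu_free (k+1) q *
      (\<Sum>m\<in>{m::nat. 1 \<le> m \<and> real m \<le> real q * eps} \<inter> {m. coprime m q}. wt k q))"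

definition Ztk :: "nat \<Rightarrow> nat \<Rightarrow> real" where
  "Ztk k N = (\<Sum>\<^sub>\<infinity>q\<in>{q::nat. q \<ge> 1}.
      mu_free (k+1) q * wt k q *
      real (card {m::nat. 1 \<le> m \<and> real m \<le> real q / real N \<and> coprime m q}))"

end

theory Submission
  imports Defs
begin

(* Since 1/(N+1) < eps \<le> 1/N, the cutoffs compare termwise, q/(N+1) \<le> q eps \<le> q/N, and every
   q < 1/eps, which Z_k omits, has q/(N+1) < 1 and so contributes nothing to Z~_k(N+1).
   Comparing the infinite sums needs summability (an infsum of a non-summable family is 0).
   The coprime count is at most q, and the sum of q wt_k(q) over (k+1)-free q is dominated by
   the Euler product of 1 + (sum over 1 \<le> a \<le> k of p^a/(p^k-1)^2) \<le> 1 + 4k/p^2, which is at most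
   exp(4k zeta(2)). *)

definition coprime_count :: "nat \<Rightarrow> real \<Rightarrow> nat" where
  "coprime_count q x = card {m::nat. 1 \<le> m \<and> real m \<le> x \<and> coprime m q}"

lemma finite_coprime_count_set: "finite {m::nat. 1 \<le> m \<and> real m \<le> x \<and> coprime m q}"
proof (rule finite_subset)
  show "{m::nat. 1 \<le> m \<and> real m \<le> x \<and> coprime m q} \<subseteq> {..nat \<lceil>x\<rceil>}"
    by (auto simp: le_nat_iff le_ceiling_iff)
qed simp

lemma coprime_count_mono: "x \<le> y \<Longrightarrow> coprime_count q x \<le> coprime_count q y"
  unfolding coprime_count_def by (rule card_mono[OF finite_coprime_count_set]) auto

lemma coprime_count_le: "x \<le> real q \<Longrightarrow> coprime_count q x \<le> q"
  unfolding coprime_count_def by (rule order_trans[OF card_mono[of "{1..q}"]]) auto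

lemma coprime_count_eq_0:
  assumes "x < 1"
  shows "coprime_count q x = 0"
proof -
  have "{m::nat. 1 \<le> m \<and> real m \<le> x \<and> coprime m q} = {}"
    using assms by auto
  then show ?thesis
    unfolding coprime_count_def by (metis card.empty)
qed

lemma sum_prod_multiplicity_le_prod_sum:
  fixes f :: "nat \<Rightarrow> nat \<Rightarrow> real"
  assumes "finite P" "finite G" "\<And>p a. f p a \<ge> 0"
    and "\<And>q. q \<in> G \<Longrightarrow> q > 0 \<and> prime_factors q \<subseteq> P"
    and "\<And>q p. q \<in> G \<Longrightarrow> p \<in> P \<Longrightarrow> multiplicity p q \<le> k"
  shows "(\<Sum>q\<in>G. \<Prod>p\<in>P. f p (multiplicity p q)) \<le> (\<Prod>p\<in>P. \<Sum>a\<le>k. f p a)"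
proof -
  define e where "e q = restrict (\<lambda>p. multiplicity p q) P" for q
  have "inj_on e G"
  proof (rule inj_onI)
    fix x y assume xy: "x \<in> G" "y \<in> G" "e x = e y"
    show "x = y"
    proof (rule multiplicity_eq_nat)
      show "x > 0" "y > 0"
        using xy assms(4) by auto
      fix p :: nat assume "prime p"
      show "multiplicity p x = multiplicity p y"
      proof (cases "p \<in> P")
        case True
        then show ?thesis
          using fun_cong[OF xy(3), of p] unfolding e_def by simp
      next
        case False
        then have "p \<notin> prime_factors x" "p \<notin> prime_factors y"
          using xy assms(4) by blast+
        then show ?thesis
          using \<open>prime p\<close> xy assms(4) by (auto simp: in_prime_factors_iff not_dvd_imp_multiplicity_0)
      qed
    qed
  qed
  then have "(\<Sum>q\<in>G. \<Prod>p\<in>P. f p (e q p)) = (\<Sum>g\<in>e ` G. \<Prod>p\<in>P. f p (g p))"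
    by (simp add: sum.reindex)
  also have "\<dots> \<le> (\<Sum>g\<in>PiE P (\<lambda>_. {..k}). \<Prod>p\<in>P. f p (g p))"
    using assms(1,3,5) unfolding e_def by (intro sum_mono2 finite_PiE prod_nonneg) auto
  also have "\<dots> = (\<Prod>p\<in>P. \<Sum>a\<le>k. f p a)"
    using assms(1) by (subst prod_sum_PiE) auto
  finally show ?thesis
    unfolding e_def by simp
qed

definition euler_factor :: "nat \<Rightarrow> nat \<Rightarrow> nat \<Rightarrow> real" where
  "euler_factor k p a = (if a = 0 then 1 else real p ^ a / (real p ^ k - 1)^2)"

lemma euler_factor_nonneg: "euler_factor k p a \<ge> 0"
  unfolding euler_factor_def by simp

lemma wt_nonneg: "wt k q \<ge> 0"
  unfolding wt_def by (intro prod_nonneg) simp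

lemma mu_free_nonneg: "mu_free j q \<ge> 0"
  unfolding mu_free_def by simp

lemma multiplicity_le_if_mu_free:
  assumes "mu_free (k+1) q \<noteq> 0" "prime p"
  shows "multiplicity p q \<le> k"
proof (rule ccontr)
  assume "\<not> multiplicity p q \<le> k"
  then have "p ^ (k+1) dvd q"
    by (intro multiplicity_dvd') simp
  with assms show False
    unfolding mu_free_def by (auto split: if_splits)
qed

lemma wt_mult_eq_prod_euler_factor:
  assumes "q > 0" "finite P" "prime_factors q \<subseteq> P" "\<And>p. p \<in> P \<Longrightarrow> prime p"
  shows "wt k q * real q = (\<Prod>p\<in>P. euler_factor k p (multiplicity p q))"
proof -
  have "real q = (\<Prod>p\<in>prime_factors q. real p ^ multiplicity p q)"
    using prod_prime_factors[of q] assms(1) by (simp flip: of_nat_prod of_nat_power)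
  then have "wt k q * real q
      = (\<Prod>p\<in>prime_factors q. 1 / (real p ^ k - 1)^2) * (\<Prod>p\<in>prime_factors q. real p ^ multiplicity p q)"
    unfolding wt_def by simp
  also have "\<dots> = (\<Prod>p\<in>prime_factors q. 1 / (real p ^ k - 1)^2 * real p ^ multiplicity p q)"
    by (rule prod.distrib[symmetric])
  also have "\<dots> = (\<Prod>p\<in>prime_factors q. euler_factor k p (multiplicity p q))"
    using assms(1) by (intro prod.cong) (auto simp: euler_factor_def prime_factors_multiplicity)
  also have "\<dots> = (\<Prod>p\<in>P. euler_factor k p (multiplicity p q))"
    using assms by (intro prod.mono_neutral_left)
      (auto simp: euler_factor_def in_prime_factors_iff not_dvd_imp_multiplicity_0)
  finally show ?thesis .
qed

lemma sum_euler_factor_le: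
  assumes "k \<ge> 2" "prime p"
  shows "(\<Sum>a\<le>k. euler_factor k p a) \<le> 1 + 4 * real k / real p ^ 2"
proof -
  have p2: "real p \<ge> 2"
    using prime_ge_2_nat[OF assms(2)] by simp
  define x where "x = real p ^ k"
  have "x \<ge> real p ^ 2"
    unfolding x_def using assms(1) p2 by (simp add: power_increasing)
  moreover have "real p ^ 2 \<ge> 4"
    using power_mono[OF p2, of 2] by simp
  ultimately have x4: "x \<ge> 4" by simp
  have "euler_factor k p a \<le> 4 / real p ^ 2" if "1 \<le> a" "a \<le> k" for a
  proof -
    have "real p ^ a \<le> x"
      unfolding x_def using that p2 by (simp add: power_increasing)
    then have "euler_factor k p a \<le> x / (x - 1)^2"
      unfolding euler_factor_def x_def[symmetric] using that by (auto intro!: divide_right_mono)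
    also have "\<dots> \<le> 4 / x"
    proof -
      have "x * x \<le> 4 * (x - 1)^2"
        using mult_nonneg_nonneg[of "3*x - 2" "x - 2"] x4 by (simp add: power2_eq_square algebra_simps)
      then show ?thesis
        using x4 by (simp add: divide_simps)
    qed
    also have "\<dots> \<le> 4 / real p ^ 2"
      using \<open>x \<ge> real p ^ 2\<close> p2 by (simp add: frac_le)
    finally show ?thesis .
  qed
  then have "(\<Sum>a\<in>{1..k}. euler_factor k p a) \<le> (\<Sum>a\<in>{1..k}. 4 / real p ^ 2)"
    by (intro sum_mono) simp
  moreover have "(\<Sum>a\<le>k. euler_factor k p a) = 1 + (\<Sum>a\<in>{1..k}. euler_factor k p a)"
    by (simp add: atMost_atLeast0 sum.atLeast_Suc_atMost euler_factor_def)
  ultimately show ?thesis by (simp add: mult.commute)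
qed

lemma prod_sum_euler_factor_le:
  assumes "k \<ge> 2" "finite P" "\<And>p. p \<in> P \<Longrightarrow> prime p"
  shows "(\<Prod>p\<in>P. \<Sum>a\<le>k. euler_factor k p a) \<le> exp (4 * real k * (\<Sum>n. inverse (real n ^ 2)))"
proof -
  have "(\<Prod>p\<in>P. \<Sum>a\<le>k. euler_factor k p a) \<le> (\<Prod>p\<in>P. exp (4 * real k * inverse (real p ^ 2)))"
  proof (intro prod_mono conjI)
    fix p assume "p \<in> P"
    show "0 \<le> (\<Sum>a\<le>k. euler_factor k p a)"
      by (intro sum_nonneg euler_factor_nonneg)
    have "(\<Sum>a\<le>k. euler_factor k p a) \<le> 1 + 4 * real k * inverse (real p ^ 2)"
      using sum_euler_factor_le[OF assms(1) assms(3)[OF \<open>p \<in> P\<close>]] by (simp add: field_simps)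
    also have "\<dots> \<le> exp (4 * real k * inverse (real p ^ 2))"
      by (rule exp_ge_add_one_self)
    finally show "(\<Sum>a\<le>k. euler_factor k p a) \<le> exp (4 * real k * inverse (real p ^ 2))" .
  qed
  also have "\<dots> = exp (4 * real k * (\<Sum>p\<in>P. inverse (real p ^ 2)))"
    using assms(2) by (simp add: exp_sum sum_distrib_left)
  also have "\<dots> \<le> exp (4 * real k * (\<Sum>n. inverse (real n ^ 2)))"
    using assms(2) inverse_power_summable[of 2, where 'a=real]
    by (auto intro!: mult_left_mono sum_le_suminf)
  finally show ?thesis .
qed

lemma sum_mu_free_wt_le:
  assumes "k \<ge> 2" "finite F"
  shows "(\<Sum>q\<in>F. mu_free (k+1) q * wt k q * real q) \<le> exp (4 * real k * (\<Sum>n. inverse (real n ^ 2)))"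
proof -
  define G where "G = {q\<in>F. mu_free (k+1) q \<noteq> 0}"
  define P where "P = (\<Union>q\<in>G. prime_factors q)"
  have G: "finite G" "\<And>q. q \<in> G \<Longrightarrow> q > 0 \<and> mu_free (k+1) q = 1"
    using assms(2) unfolding G_def mu_free_def by (auto split: if_splits)
  have P: "finite P" "\<And>p. p \<in> P \<Longrightarrow> prime p" "\<And>q. q \<in> G \<Longrightarrow> prime_factors q \<subseteq> P"
    using G(1) unfolding P_def by auto
  have "(\<Sum>q\<in>F. mu_free (k+1) q * wt k q * real q) = (\<Sum>q\<in>G. wt k q * real q)"
    using assms(2) G(2) unfolding G_def by (intro sum.mono_neutral_cong_right) auto
  also have "\<dots> = (\<Sum>q\<in>G. \<Prod>p\<in>P. euler_factor k p (multiplicity p q))"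
    using G(2) P by (intro sum.cong refl wt_mult_eq_prod_euler_factor) auto
  also have "\<dots> \<le> (\<Prod>p\<in>P. \<Sum>a\<le>k. euler_factor k p a)"
    using G P multiplicity_le_if_mu_free[of k]
    by (intro sum_prod_multiplicity_le_prod_sum euler_factor_nonneg) auto
  also have "\<dots> \<le> exp (4 * real k * (\<Sum>n. inverse (real n ^ 2)))"
    using prod_sum_euler_factor_le[OF assms(1) P(1,2)] .
  finally show ?thesis .
qed

lemma summable_on_mu_free_wt:
  assumes "k \<ge> 2"
  shows "(\<lambda>q. mu_free (k+1) q * wt k q * real q) summable_on A"
proof (rule summable_on_subset_banach[of _ UNIV])
  show "(\<lambda>q. mu_free (k+1) q * wt k q * real q) summable_on UNIV"
    using sum_mu_free_wt_le[OF assms] mu_free_nonneg wt_nonneg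
    by (intro nonneg_bdd_above_summable_on bdd_aboveI) auto
qed simp

lemma summable_on_coprime_count:
  assumes "k \<ge> 2" "\<And>q. q \<in> A \<Longrightarrow> x q \<le> real q"
  shows "(\<lambda>q. mu_free (k+1) q * wt k q * real (coprime_count q (x q))) summable_on A"
proof (rule summable_on_comparison_test[OF summable_on_mu_free_wt[OF assms(1)]])
  fix q assume "q \<in> A"
  then have "coprime_count q (x q) \<le> q"
    using assms(2) coprime_count_le by blast
  then show "mu_free (k+1) q * wt k q * real (coprime_count q (x q)) \<le> mu_free (k+1) q * wt k q * real q"
    by (intro mult_left_mono mult_nonneg_nonneg mu_free_nonneg wt_nonneg) simp_all
  show "0 \<le> mu_free (k+1) q * wt k q * real (coprime_count q (x q))"
    by (intro mult_nonneg_nonneg mu_free_nonneg wt_nonneg) simp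
qed

lemma infsum_coprime_count_mono:
  fixes x y :: "nat \<Rightarrow> real"
  assumes "k \<ge> 2"
    and "\<And>q. q \<in> A \<Longrightarrow> x q \<le> real q" "\<And>q. q \<in> B \<Longrightarrow> y q \<le> real q"
    and "\<And>q. q \<in> A \<inter> B \<Longrightarrow> x q \<le> y q" "\<And>q. q \<in> A - B \<Longrightarrow> x q < 1"
  shows "(\<Sum>\<^sub>\<infinity>q\<in>A. mu_free (k+1) q * wt k q * real (coprime_count q (x q)))
    \<le> (\<Sum>\<^sub>\<infinity>q\<in>B. mu_free (k+1) q * wt k q * real (coprime_count q (y q)))"
proof (rule infsum_mono_neutral)
  show "(\<lambda>q. mu_free (k+1) q * wt k q * real (coprime_count q (x q))) summable_on A"
    using assms(1,2) by (rule summable_on_coprime_count)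
  show "(\<lambda>q. mu_free (k+1) q * wt k q * real (coprime_count q (y q))) summable_on B"
    using assms(1,3) by (rule summable_on_coprime_count)
  show "mu_free (k+1) q * wt k q * real (coprime_count q (x q))
      \<le> mu_free (k+1) q * wt k q * real (coprime_count q (y q))" if "q \<in> A \<inter> B" for q
    using assms(4)[OF that] coprime_count_mono
    by (intro mult_left_mono mult_nonneg_nonneg mu_free_nonneg wt_nonneg) simp_all
  show "mu_free (k+1) q * wt k q * real (coprime_count q (x q)) \<le> 0" if "q \<in> A - B" for q
    using assms(5)[OF that] by (simp add: coprime_count_eq_0)
  show "0 \<le> mu_free (k+1) q * wt k q * real (coprime_count q (y q))" for q
    by (intro mult_nonneg_nonneg mu_free_nonneg wt_nonneg) simp
qed

lemma Zk_eq_infsum_coprime_count: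
  "Zk k eps = (\<Sum>\<^sub>\<infinity>q\<in>{q. q \<ge> 1 \<and> real q \<ge> 1 / eps}.
     mu_free (k+1) q * wt k q * real (coprime_count q (real q * eps)))"
proof -
  have "{m::nat. 1 \<le> m \<and> real m \<le> real q * eps} \<inter> {m. coprime m q}
      = {m. 1 \<le> m \<and> real m \<le> real q * eps \<and> coprime m q}" for q
    by auto
  then show ?thesis
    unfolding Zk_def coprime_count_def by (simp add: ac_simps)
qed

lemma Ztk_eq_infsum_coprime_count:
  "Ztk k N = (\<Sum>\<^sub>\<infinity>q\<in>{q. q \<ge> 1}.
     mu_free (k+1) q * wt k q * real (coprime_count q (real q / real N)))"
  unfolding Ztk_def coprime_count_def ..

lemma nat_floor_inverse_bounds:
  fixes eps :: real
  assumes "0 < eps" "eps < 1"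
  defines "N \<equiv> nat \<lfloor>1 / eps\<rfloor>"
  shows "1 \<le> real N" "1 / eps < real N + 1" "eps * real N \<le> 1" "1 < eps * (real N + 1)"
proof -
  have "1 < 1 / eps"
    using assms(1,2) by simp
  then have "1 \<le> \<lfloor>1 / eps\<rfloor>"
    by linarith
  then have "real N = real_of_int \<lfloor>1 / eps\<rfloor>"
    unfolding N_def by (intro of_nat_nat) linarith
  then have "1 \<le> real N" "real N \<le> 1 / eps" "1 / eps < real N + 1"
    using \<open>1 \<le> \<lfloor>1 / eps\<rfloor>\<close> by linarith+
  then show "1 \<le> real N" "1 / eps < real N + 1" "eps * real N \<le> 1" "1 < eps * (real N + 1)"
    using assms(1) by (simp_all add: field_simps)
qed

theorem lemma2p1:
  fixes k :: nat and eps :: real and N :: nat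
  assumes "k \<ge> 2" and "0 < eps" and "eps < 1" and "N = nat \<lfloor>1 / eps\<rfloor>"
  shows "Ztk k (N + 1) \<le> Zk k eps \<and> Zk k eps \<le> Ztk k N"
proof -
  have bounds:
    "1 \<le> real N" "1 / eps < real N + 1" "eps * real N \<le> 1" "1 < eps * (real N + 1)"
    using nat_floor_inverse_bounds[OF assms(2,3)] unfolding assms(4) by auto
  have "Ztk k (N + 1) \<le> Zk k eps"
    unfolding Ztk_eq_infsum_coprime_count Zk_eq_infsum_coprime_count
  proof (rule infsum_coprime_count_mono[OF assms(1)])
    fix q :: nat
    show "real q / real (N + 1) \<le> real q"
      by (simp add: field_simps)
    show "real q * eps \<le> real q"
      using assms(3) by (simp add: mult_left_le)
    show "real q / real (N + 1) \<le> real q * eps"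
      using mult_left_mono[OF less_imp_le[OF bounds(4)], of "real q"] by (simp add: field_simps)
    show "real q / real (N + 1) < 1" if "q \<in> {q. q \<ge> 1} - {q. q \<ge> 1 \<and> real q \<ge> 1 / eps}"
    proof -
      have "real q < real N + 1"
        using that bounds(2) by auto
      then show ?thesis
        by (simp add: field_simps)
    qed
  qed
  moreover have "Zk k eps \<le> Ztk k N"
    unfolding Ztk_eq_infsum_coprime_count Zk_eq_infsum_coprime_count
  proof (rule infsum_coprime_count_mono[OF assms(1)])
    fix q :: nat
    show "real q * eps \<le> real q / real N"
      using mult_left_mono[OF bounds(3), of "real q"] bounds(1) by (simp add: field_simps)
    show "real q / real N \<le> real q"
      using mult_left_mono[OF bounds(1), of "real q"] bounds(1) by (simp add: field_simps)
    show "real q * eps \<le> real q"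
      using assms(3) by (simp add: mult_left_le)
  qed auto
  ultimately show ?thesis ..
qed

end
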